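(* Let $n\in\mathbb{N}$ and $a\in\mathbb{R}$ with $|a|\ge2$. Let $G_n(a,1)$ be the $(n+2)\times n$ matrix whose $(i,j)$ entry is $1$ if $i=j$, $a$ if $i=j+1$, $1$ if $i=j+2$, and $0$ otherwise. For $1\le i<j\le n+2$, let $G_n(a,1)^{i,j}$ be the $n\times n$ matrix obtained by deleting the $i$-th and $j$-th rows of $G_n(a,1)$. Then $G_n(a,1)^{i,j}$ is invertible; that is, all order-$n$ minors of $G_n(a,1)$ are nonzero. *)

theory Defs
  imports "Jordan_Normal_Form.Determinant" "Jordan_Normal_Form.DL_Submatrix"
begin

text \<open>G_n(a,1): the (n+2) x n matrix with entry 1 if i=j, a if i=j+1, 1 if i=j+2, 0 otherwise.
  Indices are 0-based in Jordan_Normal_Form; the relations i=j, i=j+1, i=j+2 are shift-invariant.\<close>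
definition G_mat :: "nat \<Rightarrow> real \<Rightarrow> real mat" where
  "G_mat n a = mat (n + 2) n (\<lambda>(i, j).
     if i = j then 1 else if i = j + 1 then a else if i = j + 2 then 1 else 0)"

definition G_del :: "nat \<Rightarrow> real \<Rightarrow> nat \<Rightarrow> nat \<Rightarrow> real mat" where
  "G_del n a i j = submatrix (G_mat n a) ({0..<n + 2} - {i - 1, j - 1}) {0..<n}"

end

theory Submission
  imports Defs
begin

text \<open>A kernel vector of G_n(a,1)^{i,j}, extended by zeros to all of \<int>, satisfies the
  three-term recurrence y r + a y (r-1) + y (r-2) = 0 at every row r \<in> [0, n+1] except the two
  deleted rows p = i-1 < q = j-1. Run upwards from the zeros below 0, the recurrence kills y below p; run
  downwards from the zeros above n-1, it kills y from q-1 on. Between p and q-1, |a| \<ge> 2 forces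
  |y| to grow by at least |y p| per step, so |y p| \<le> |y (q-1)| = 0, and running upwards once
  more from p kills the rest.\<close>

lemma three_term_recurrence_zero_upwards:
  fixes y :: "int \<Rightarrow> 'a::ring"
  assumes "y (m - 2) = 0" "y (m - 1) = 0"
    and rec: "\<And>r. m \<le> r \<Longrightarrow> r \<le> M \<Longrightarrow> y r + a * y (r - 1) + y (r - 2) = 0"
    and "m - 2 \<le> k" "k \<le> M"
  shows "y k = 0"
proof -
  have "k \<le> M \<longrightarrow> y (k - 1) = 0 \<and> y k = 0" if "m - 1 \<le> k" for k
    using that
  proof (induction k rule: int_ge_induct)
    case base
    then show ?case using assms(1,2) by simp
  next
    case (step k)
    show ?case
    proof
      assume "k + 1 \<le> M"
      then have "y (k - 1) = 0" "y k = 0" using step.IH by auto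
      moreover have "y (k + 1) + a * y k + y (k - 1) = 0"
        using rec[of "k + 1"] step.hyps \<open>k + 1 \<le> M\<close> by simp
      ultimately show "y (k + 1 - 1) = 0 \<and> y (k + 1) = 0" by simp
    qed
  qed
  then show ?thesis
    using assms(1,4,5) by (cases "k = m - 2") auto
qed

lemma three_term_recurrence_zero_downwards:
  fixes y :: "int \<Rightarrow> 'a::ring"
  assumes "y (M - 1) = 0" "y M = 0"
    and rec: "\<And>r. m \<le> r \<Longrightarrow> r \<le> M \<Longrightarrow> y r + a * y (r - 1) + y (r - 2) = 0"
    and "m - 2 \<le> k" "k \<le> M"
  shows "y k = 0"
proof -
  \<comment> \<open>The recurrence is palindromic, so the reflection of y on [m-2, M] satisfies it too.\<close>
  define z where "z t = y (m + M - 2 - t)" for t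
  have z_rec: "z r + a * z (r - 1) + z (r - 2) = 0" if "m \<le> r" "r \<le> M" for r
    using rec[of "m + M - r"] that by (simp add: z_def algebra_simps)
  have "z (m + M - 2 - k) = 0"
    by (rule three_term_recurrence_zero_upwards[where a = a, OF _ _ z_rec])
      (use assms in \<open>auto simp: z_def\<close>)
  then show ?thesis by (simp add: z_def)
qed

lemma three_term_recurrence_abs_increment:
  fixes y :: "int \<Rightarrow> 'a::linordered_idom"
  assumes a: "\<bar>a\<bar> \<ge> 2" and "y (p - 1) = 0"
    and rec: "\<And>r. p < r \<Longrightarrow> r \<le> M \<Longrightarrow> y r + a * y (r - 1) + y (r - 2) = 0"
    and "p \<le> k" "k \<le> M"
  shows "\<bar>y (k - 1)\<bar> + \<bar>y p\<bar> \<le> \<bar>y k\<bar>"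
proof -
  have "k \<le> M \<longrightarrow> \<bar>y (k - 1)\<bar> + \<bar>y p\<bar> \<le> \<bar>y k\<bar>" if "p \<le> k" for k
    using that
  proof (induction k rule: int_ge_induct)
    case base
    then show ?case using assms(2) by simp
  next
    case (step k)
    show ?case
    proof
      assume "k + 1 \<le> M"
      then have IH: "\<bar>y (k - 1)\<bar> + \<bar>y p\<bar> \<le> \<bar>y k\<bar>" using step.IH by simp
      have "y (k + 1) = - (a * y k) - y (k - 1)"
        using rec[of "k + 1"] step.hyps \<open>k + 1 \<le> M\<close> by (simp add: algebra_simps)
      moreover have "2 * \<bar>y k\<bar> \<le> \<bar>a * y k\<bar>"
        using a by (simp add: abs_mult mult_right_mono)
      ultimately show "\<bar>y (k + 1 - 1)\<bar> + \<bar>y p\<bar> \<le> \<bar>y (k + 1)\<bar>"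
        using IH by (simp add: abs_triangle_ineq4)
    qed
  qed
  then show ?thesis using assms(4,5) by simp
qed

lemma three_term_recurrence_two_gaps_zero:
  fixes y :: "int \<Rightarrow> 'a::linordered_idom"
  assumes a: "\<bar>a\<bar> \<ge> 2" and pq: "0 \<le> p" "p < q" "q \<le> N + 1"
    and support: "\<And>k. k < 0 \<or> N \<le> k \<Longrightarrow> y k = 0"
    and rec: "\<And>r. 0 \<le> r \<Longrightarrow> r \<le> N + 1 \<Longrightarrow> r \<noteq> p \<Longrightarrow> r \<noteq> q \<Longrightarrow>
      y r + a * y (r - 1) + y (r - 2) = 0"
  shows "y k = 0"
proof -
  have below_p: "y k = 0" if "k < p" for k
  proof (cases "k < 0")
    case False
    show ?thesis
      by (rule three_term_recurrence_zero_upwards[where a = a and m = 0 and M = "p - 1"])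
        (use False that support rec pq in auto)
  qed (use support in auto)
  have from_q: "y k = 0" if "q - 1 \<le> k" for k
  proof (cases "N + 1 < k")
    case False
    show ?thesis
      by (rule three_term_recurrence_zero_downwards[where a = a and m = "q + 1" and M = "N + 1"])
        (use False that support rec pq in auto)
  qed (use support in auto)
  have "\<bar>y (q - 2)\<bar> + \<bar>y p\<bar> \<le> \<bar>y (q - 1)\<bar>"
    using three_term_recurrence_abs_increment[OF a, where p = p and M = "q - 1" and k = "q - 1"]
      below_p rec pq
    by fastforce
  then have "y p = 0" using from_q by simp
  have between_p_q: "y k = 0" if "p - 1 \<le> k" "k \<le> q - 1" for k
    by (rule three_term_recurrence_zero_upwards[where a = a and m = "p + 1" and M = "q - 1"])
      (use that below_p \<open>y p = 0\<close> rec pq in auto)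
  show ?thesis
    using below_p from_q between_p_q by (cases "k < p"; cases "k \<le> q - 1") auto
qed

definition extend_by_zero :: "'a::zero vec \<Rightarrow> int \<Rightarrow> 'a" where
  "extend_by_zero v t = (if 0 \<le> t \<and> t < int (dim_vec v) then v $ nat t else 0)"

lemma sum_lessThan_if_int_eq:
  "(\<Sum>c<n. if int c = t then w c else 0) = (if 0 \<le> t \<and> t < int n then w (nat t) else 0)"
proof (cases "0 \<le> t")
  case True
  then have "(\<Sum>c<n. if int c = t then w c else 0) = (\<Sum>c<n. if c = nat t then w c else 0)"
    by (intro sum.cong) auto
  then show ?thesis using True by (simp add: nat_less_iff)
qed auto

lemma G_mat_carrier_mat: "G_mat n a \<in> carrier_mat (n + 2) n"
  by (simp add: G_mat_def)

lemma G_mat_mult_vec_nth: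
  assumes "v \<in> carrier_vec n" "r < n + 2"
  shows "(G_mat n a *\<^sub>v v) $ r =
    extend_by_zero v (int r) + a * extend_by_zero v (int r - 1) + extend_by_zero v (int r - 2)"
proof -
  have "(G_mat n a *\<^sub>v v) $ r = (\<Sum>c<n. G_mat n a $$ (r, c) * v $ c)"
    using assms by (simp add: G_mat_def scalar_prod_def lessThan_atLeast0)
  also have "\<dots> = (\<Sum>c<n. (if int c = int r then v $ c else 0)
      + a * (if int c = int r - 1 then v $ c else 0) + (if int c = int r - 2 then v $ c else 0))"
    using assms(2) by (intro sum.cong) (auto simp: G_mat_def)
  also have "\<dots> =
      extend_by_zero v (int r) + a * extend_by_zero v (int r - 1) + extend_by_zero v (int r - 2)"
    using assms(1) by (simp add: sum.distrib sum_distrib_left[symmetric] sum_lessThan_if_int_eq extend_by_zero_def)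
  finally show ?thesis .
qed

lemma card_less_dim_row_submatrix:
  assumes "r \<in> I" "r < dim_row A"
  shows "card {x \<in> I. x < r} < dim_row (submatrix A I J)"
proof -
  have "{x \<in> I. x < r} \<subset> {x. x < dim_row A \<and> x \<in> I}"
    using assms by auto
  then show ?thesis
    by (simp add: dim_submatrix psubset_card_mono)
qed

lemma submatrix_rows_mult_vec_nth:
  assumes A: "A \<in> carrier_mat m n" and v: "v \<in> carrier_vec n" and r: "r \<in> I" "r < m"
  shows "(submatrix A I {0..<n} *\<^sub>v v) $ card {x \<in> I. x < r} = (A *\<^sub>v v) $ r"
proof -
  let ?S = "submatrix A I {0..<n}" and ?k = "card {x \<in> I. x < r}"
  have k: "?k < dim_row ?S"
    using A r by (intro card_less_dim_row_submatrix) auto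
  have "?S $$ (?k, c) = A $$ (r, c)" if "c < n" for c
  proof -
    have "{x \<in> {0..<n}. x < c} = {..<c}"
      using that by auto
    then show ?thesis
      using submatrix_index_card[of r A c I "{0..<n}"] A r that by simp
  qed
  moreover have "dim_col ?S = n"
    using A by (simp add: dim_submatrix)
  ultimately show ?thesis
    using A v r k by (simp add: scalar_prod_def)
qed

lemma G_del_carrier_mat:
  assumes "1 \<le> i" "i < j" "j \<le> n + 2"
  shows "G_del n a i j \<in> carrier_mat n n"
proof -
  note G_mat_carrier_mat
  moreover have "{x. x < n + 2 \<and> x \<in> {0..<n + 2} - {i - 1, j - 1}} = {0..<n + 2} - {i - 1, j - 1}"
    by auto
  moreover have "card ({0..<n + 2} - {i - 1, j - 1}) = n"
    using assms by (simp add: card_Diff_subset)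
  ultimately show ?thesis
    unfolding G_del_def carrier_mat_def by (simp add: dim_submatrix)
qed

lemma det_G_del_nonzero:
  assumes a: "\<bar>a\<bar> \<ge> 2" and ij: "1 \<le> i" "i < j" "j \<le> n + 2"
  shows "det (G_del n a i j) \<noteq> 0"
proof
  assume "det (G_del n a i j) = 0"
  then obtain v where v: "v \<in> carrier_vec n" "v \<noteq> 0\<^sub>v n" and kernel: "G_del n a i j *\<^sub>v v = 0\<^sub>v n"
    using det_0_iff_vec_prod_zero_field[OF G_del_carrier_mat[OF ij]] by auto
  have rec: "extend_by_zero v r + a * extend_by_zero v (r - 1) + extend_by_zero v (r - 2) = 0"
    if "0 \<le> r" "r \<le> int n + 1" "r \<noteq> int (i - 1)" "r \<noteq> int (j - 1)" for r
  proof -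
    let ?I = "{0..<n + 2} - {i - 1, j - 1}"
    have r: "nat r \<in> ?I" "nat r < n + 2"
      using that by auto
    have "card {x \<in> ?I. x < nat r} < dim_row (G_del n a i j)"
      unfolding G_del_def
      by (rule card_less_dim_row_submatrix) (use r carrier_matD(1)[OF G_mat_carrier_mat] in auto)
    then have "card {x \<in> ?I. x < nat r} < n"
      using carrier_matD(1)[OF G_del_carrier_mat[OF ij]] by simp
    have "extend_by_zero v r + a * extend_by_zero v (r - 1) + extend_by_zero v (r - 2) =
        (G_mat n a *\<^sub>v v) $ nat r"
      using G_mat_mult_vec_nth[OF v(1) r(2)] \<open>0 \<le> r\<close> by simp
    also have "\<dots> = (G_del n a i j *\<^sub>v v) $ card {x \<in> ?I. x < nat r}"
      unfolding G_del_def
      by (rule submatrix_rows_mult_vec_nth[OF G_mat_carrier_mat v(1) r, symmetric])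
    also have "\<dots> = 0"
      using kernel \<open>card {x \<in> ?I. x < nat r} < n\<close> by simp
    finally show ?thesis .
  qed
  have extension_zero: "extend_by_zero v k = 0" for k
  proof (rule three_term_recurrence_two_gaps_zero[OF a _ _ _ _ rec])
    show "0 \<le> int (i - 1)" "int (i - 1) < int (j - 1)" "int (j - 1) \<le> int n + 1"
      using ij by auto
    show "extend_by_zero v t = 0" if "t < 0 \<or> int n \<le> t" for t
      using that v(1) by (auto simp: extend_by_zero_def)
  qed
  have "v $ c = 0" if "c < n" for c
    using extension_zero[of "int c"] v(1) that by (simp add: extend_by_zero_def)
  then have "v = 0\<^sub>v n"
    using v(1) by (intro eq_vecI) auto
  with v(2) show False ..
qed

lemma invertible_mat_if_det_nonzero:
  fixes A :: "'a::field mat"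
  assumes A: "A \<in> carrier_mat n n" and "det A \<noteq> 0"
  shows "invertible_mat A"
proof -
  obtain B where "B \<in> carrier_mat n n" "B * A = 1\<^sub>m n" "A * B = 1\<^sub>m n"
    using det_non_zero_imp_unit[OF assms] unfolding Units_def ring_mat_def by auto
  then show ?thesis
    using A unfolding invertible_mat_def inverts_mat_def by auto
qed

theorem proposition4p4:
  fixes n :: nat and a :: real and i j :: nat
  assumes "\<bar>a\<bar> \<ge> 2"
    and "1 \<le> i" and "i < j" and "j \<le> n + 2"
  shows "invertible_mat (G_del n a i j) \<and> det (G_del n a i j) \<noteq> 0"
proof -
  have "det (G_del n a i j) \<noteq> 0"
    using det_G_del_nonzero assms by blast
  moreover have "G_del n a i j \<in> carrier_mat n n"
    using G_del_carrier_mat assms(2-4) by blast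
  ultimately show ?thesis
    using invertible_mat_if_det_nonzero by blast
qed

end
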